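(* Let $A$ be a finitely generated free abelian group and let $SK_{\mathbb{F}_2}(A/2)^d_i$ be the homogeneous component of weight $d$ and degree $i$ of $SK_{\mathbb{F}_2}(A/2)$. Then: (0) $SK_{\mathbb{F}_2}(A/2)^d_d = \Lambda_{\mathbb{F}_2}^d(A/2)$. (1) $SK_{\mathbb{F}_2}(A/2)^d_{d-1}=\Phi^d(A)$, where $\Phi^1(A)=0$, $\Phi^2(A)=A/2^{(1)}$, $\Phi^3(A)=A/2\otimes A/2^{(1)}$, and for $d\ge 4$, $\Phi^d(A)$ is equivalently (a) the kernel of the unique nonzero morphism $\Gamma^{d-2}_{\mathbb{F}_2}(A/2)\otimes A/2^{(1)}\to\Gamma^{d-4}_{\mathbb{F}_2}(A/2)\otimes\Gamma^2_{\mathbb{F}_2}(A/2^{(1)})$ (induced by comultiplication of $\Gamma_{\mathbb{F}_2}(A/2)$, the Verschiebung $\Gamma^2_{\mathbb{F}_2}(A/2)\to A/2^{(1)}$ and multiplication $(A/2^{(1)})^{\otimes 2}\to\Gamma^2_{\mathbb{F}_2}(A/2^{(1)})$); (b) the image of the unique nonzero morphism $\Gamma^d_{\mathbb{F}_2}(A/2)\to\Gamma^{d-2}_{\mathbb{F}_2}(A/2)\otimes A/2^{(1)}$ (induced by comultiplication and the Verschiebung); (c) the cokernel of the canonical inclusion $\Lambda^d_{\mathbb{F}_2}(A/2)\hookrightarrow\Gamma^d_{\mathbb{F}_2}(A/2)$. (2) For $i<d-1$, $SK_{\mathbb{F}_2}(A/2)^d_i$ is equivalently (a) the kernel of $\partial_{\mathrm{SKos}}:X^d_i\to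 X^d_{i-1}$, (b) the image of $\partial_{\mathrm{SKos}}:X^d_{i+1}\to X^d_i$, (c) the cokernel of $\partial_{\mathrm{SKos}}:X^d_{i+2}\to X^d_{i+1}$, where $X^d_j$ denotes the component of weight $d$ and degree $j$ of $X=\bigotimes_{r\ge0}\Gamma_{\mathbb{F}_2}(A/2^{(r)}[1])$.
   Context: $A/2=A\otimes\mathbb{Z}/2$ and $A/2^{(r)}$ is its $r$-th Frobenius twist (strict polynomial subfunctor of $S^{2^r}_{\mathbb{F}_2}(A/2)$ generated by $2^r$-th powers, of weight $2^r$). $\Gamma_{\mathbb{F}_2}(W[1])$ is the divided power algebra over $\mathbb{F}_2$ on a generator $W$ in degree $1$ (so $\Gamma^k(W)$ sits in degree $k$ and weight $k\cdot$weight$(W)$). The Verschiebung $\Gamma^2_{\mathbb{F}_2}(V)\to V^{(1)}$ is the unique nonzero morphism. On $X=\bigotimes_{r\ge0}\Gamma_{\mathbb{F}_2}(A/2^{(r)}[1])$, $\partial_{\mathrm{SKos}}=\sum_{r\ge0}\partial_r$, where $\partial_r$ acts on factors $r,r+1$ by $\Gamma^d(V)\otimes\Gamma^e(V^{(1)})\to\Gamma^{d-2}(V)\otimes\Gamma^2(V)\otimes\Gamma^e(V^{(1)})\to\Gamma^{d-2}(V)\otimes\Gamma^{e+1}(V^{(1)})$ (comultiplication, then Verschiebung and multiplication), $V=A/2^{(r)}$, and by the identity on other factors; it is a differential of graded algebras. $SK_{\mathbb{F}_2}(A/2)$ is the subalgebra of cycles of $(X,\partial_{\mathrm{SKos}})$.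 *)

theory Defs
  imports Main
begin

(* Concrete model, for A = Z^n (so A/2 = F_2^n with basis e_0..e_{n-1}).
   A basis monomial of X = (X)_{r>=0} Gamma(A/2^(r)[1]) is an exponent function
   m r i = divided-power exponent of the basis vector e_i^(r) of A/2^(r) (i < n).
   The monomial  prod_{r,i} gamma_{m r i}(e_i^(r))  has
     degree  = sum_{r,i} m r i,   weight = sum_{r,i} 2^r * m r i.
   Elements of X over F_2 are finite sets of basis monomials (coefficient 1),
   addition being symmetric difference. *)

definition deg :: "nat \<Rightarrow> nat \<Rightarrow> (nat \<Rightarrow> nat \<Rightarrow> nat) \<Rightarrow> nat" where
  "deg n d m = (\<Sum>r<d. \<Sum>i<n. m r i)"

definition wt :: "nat \<Rightarrow> nat \<Rightarrow> (nat \<Rightarrow> nat \<Rightarrow> nat) \<Rightarrow> nat" where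
  "wt n d m = (\<Sum>r<d. \<Sum>i<n. 2 ^ r * m r i)"

(* basis of X^d_j (weight d, degree j); a nonzero exponent at level r forces 2^r <= d, so r < d *)
definition Bas :: "nat \<Rightarrow> nat \<Rightarrow> nat \<Rightarrow> (nat \<Rightarrow> nat \<Rightarrow> nat) set" where
  "Bas n d j = {m. (\<forall>r i. m r i \<noteq> 0 \<longrightarrow> r < d \<and> i < n) \<and> deg n d m = j \<and> wt n d m = d}"

definition Xsp :: "nat \<Rightarrow> nat \<Rightarrow> nat \<Rightarrow> (nat \<Rightarrow> nat \<Rightarrow> nat) set set" where
  "Xsp n d j = Pow (Bas n d j)"

definition step :: "(nat \<Rightarrow> nat \<Rightarrow> nat) \<Rightarrow> nat \<Rightarrow> nat \<Rightarrow> (nat \<Rightarrow> nat \<Rightarrow> nat)" where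
  "step m r i = (\<lambda>r' i'. if r' = r \<and> i' = i then m r i - 2
                         else if r' = Suc r \<and> i' = i then Suc (m (Suc r) i)
                         else m r' i')"

(* partial_SKos on a basis monomial: comultiplication picks gamma_2(e_i^(r)) (coefficient 1),
   the Verschiebung sends gamma_2(e_i^(r)) to e_i^(r+1) and kills e_i e_k (i ~= k),
   multiplication e_i^(r+1) * gamma_b(e_i^(r+1)) = (b+1) gamma_{b+1}(e_i^(r+1)),
   nonzero mod 2 iff b is even. *)
definition dmono :: "(nat \<Rightarrow> nat \<Rightarrow> nat) \<Rightarrow> (nat \<Rightarrow> nat \<Rightarrow> nat) set" where
  "dmono m = {step m r i | r i. 2 \<le> m r i \<and> even (m (Suc r) i)}"

definition dlin :: "(nat \<Rightarrow> nat \<Rightarrow> nat) set \<Rightarrow> (nat \<Rightarrow> nat \<Rightarrow> nat) set" where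
  "dlin S = {y. odd (card {m \<in> S. y \<in> dmono m})}"

definition SK :: "nat \<Rightarrow> nat \<Rightarrow> nat \<Rightarrow> (nat \<Rightarrow> nat \<Rightarrow> nat) set set" where
  "SK n d j = {S \<in> Xsp n d j. dlin S = {}}"

(* Lambda^d(A/2) inside Gamma^d(A/2) = X^d_d: span of square-free products e_{i1}...e_{id} *)
definition Lam :: "nat \<Rightarrow> nat \<Rightarrow> (nat \<Rightarrow> nat \<Rightarrow> nat) set set" where
  "Lam n d = {S \<in> Xsp n d d. \<forall>m\<in>S. \<forall>i. m 0 i \<le> 1}"

end

theory Submission
  imports Defs "HOL-Library.Product_Lexorder"
begin

(* A monomial \<Prod> \<gamma>_{m r i}(e_i^(r)) of degree j < d cannot live on level 0 alone with all
   exponents at most 1, since then its weight would equal its degree.  Hence it has a position (r, i)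
   where the exponent of e_i^(r+1) is odd or that of e_i^(r) is at least 2.  At the lexicographically
   least such position h undoes a move of \<partial> (exponent +2 at level r, -1 at level r+1) when the
   exponent at level r+1 is odd, and is 0 otherwise; a case analysis shows \<partial>h + h\<partial> = id, so
   below the top degree cycles are boundaries.  In top degree only level 0 occurs, square-free
   monomials are cycles, and distinct monomials with an exponent \<ge> 2 have distinct moves, so a cycle
   is a sum of square-free monomials.  For (d, j) = (1, 0), (2, 0), (3, 1) there are no monomials. *)

definition f2_sum :: "('a \<Rightarrow> 'b set) \<Rightarrow> 'a set \<Rightarrow> 'b set" where
  "f2_sum f S = {y. odd (card {x \<in> S. y \<in> f x})}"

lemma f2_sum_empty [simp]: "f2_sum f {} = {}"
  by (simp add: f2_sum_def)

lemma f2_sum_insert: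
  assumes "finite S" "a \<notin> S"
  shows "f2_sum f (insert a S) = sym_diff (f a) (f2_sum f S)"
proof -
  have "{x \<in> insert a S. y \<in> f x} = (if y \<in> f a then insert a {x \<in> S. y \<in> f x} else {x \<in> S. y \<in> f x})"
    for y by auto
  then show ?thesis
    using assms by (auto simp: f2_sum_def)
qed

lemma f2_sum_singleton [simp]: "f2_sum f {a} = f a"
  by (simp add: f2_sum_insert)

lemma f2_sum_subset_UN: "f2_sum f S \<subseteq> \<Union> (f ` S)"
proof
  fix y
  assume "y \<in> f2_sum f S"
  then have "odd (card {x \<in> S. y \<in> f x})"
    by (simp add: f2_sum_def)
  then have "{x \<in> S. y \<in> f x} \<noteq> {}"
    by (intro notI) simp
  then show "y \<in> \<Union> (f ` S)"
    by auto
qed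

lemma finite_f2_sum: "finite S \<Longrightarrow> (\<And>x. x \<in> S \<Longrightarrow> finite (f x)) \<Longrightarrow> finite (f2_sum f S)"
  by (meson finite_UN_I finite_subset f2_sum_subset_UN)

lemma f2_sum_cong: "(\<And>x. x \<in> S \<Longrightarrow> f x = g x) \<Longrightarrow> f2_sum f S = f2_sum g S"
  unfolding f2_sum_def by (metis (mono_tags, lifting) Collect_cong)

lemma f2_sum_sym_diff:
  assumes "finite A" "finite B"
  shows "f2_sum f (sym_diff A B) = sym_diff (f2_sum f A) (f2_sum f B)"
proof -
  have "odd (card {x \<in> sym_diff A B. y \<in> f x})
      \<longleftrightarrow> odd (card {x \<in> A. y \<in> f x}) \<noteq> odd (card {x \<in> B. y \<in> f x})" for y
  proof -
    let ?C = "\<lambda>X. card {x \<in> X. y \<in> f x}"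
    have split: "?C (X \<union> Y) = ?C X + ?C Y" if "finite X" "finite Y" "X \<inter> Y = {}" for X Y
      using that by (subst card_Un_disjoint[symmetric]) (auto intro: arg_cong[where f = card])
    have partition: "(A - B) \<union> (A \<inter> B) = A" "(B - A) \<union> (A \<inter> B) = B"
      by blast+
    have "?C (sym_diff A B) = ?C (A - B) + ?C (B - A)"
      using split[of "A - B" "B - A"] assms by auto
    moreover have "?C A = ?C (A - B) + ?C (A \<inter> B)"
      using split[of "A - B" "A \<inter> B"] assms unfolding partition by auto
    moreover have "?C B = ?C (B - A) + ?C (A \<inter> B)"
      using split[of "B - A" "A \<inter> B"] assms unfolding partition by auto
    ultimately show ?thesis by presburger
  qed
  then show ?thesis unfolding f2_sum_def by auto
qed

lemma sym_diff_f2_sum: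
  assumes "finite S"
  shows "sym_diff (f2_sum f S) (f2_sum g S) = f2_sum (\<lambda>x. sym_diff (f x) (g x)) S"
  using assms by induction (auto simp: f2_sum_insert)

lemma f2_sum_f2_sum:
  assumes "finite S" "\<And>x. x \<in> S \<Longrightarrow> finite (f x)"
  shows "f2_sum g (f2_sum f S) = f2_sum (\<lambda>x. f2_sum g (f x)) S"
  using assms
proof (induction S rule: finite_induct)
  case (insert a S)
  have "finite (f a)" "finite (f2_sum f S)"
    using insert by (auto intro: finite_f2_sum)
  then show ?case
    using insert by (simp add: f2_sum_insert f2_sum_sym_diff)
qed simp

lemma f2_sum_reindex:
  assumes "inj_on g V"
  shows "f2_sum f (g ` V) = f2_sum (f \<circ> g) V"
proof -
  have "{x \<in> g ` V. y \<in> f x} = g ` {v \<in> V. y \<in> f (g v)}" for y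
    by auto
  moreover have "card (g ` {v \<in> V. y \<in> f (g v)}) = card {v \<in> V. y \<in> f (g v)}" for y
    by (rule card_image) (rule inj_on_subset[OF assms], auto)
  ultimately show ?thesis
    unfolding f2_sum_def by auto
qed

lemma f2_sum_singletons:
  assumes "inj_on g V"
  shows "f2_sum (\<lambda>v. {g v}) V = g ` V"
proof -
  have "{v \<in> V. y = g v} = (if y \<in> g ` V then {the_inv_into V g y} else {})" for y
    using assms by (auto simp: the_inv_into_f_f inj_on_eq_iff)
  then show ?thesis
    unfolding f2_sum_def by auto
qed

lemma f2_sum_point:
  assumes "c \<in> V"
  shows "f2_sum (\<lambda>v. if v = c then A else {}) V = A"
proof -
  have "{v \<in> V. y \<in> (if v = c then A else {})} = (if y \<in> A then {c} else {})" for y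
    using assms by auto
  then show ?thesis
    unfolding f2_sum_def by auto
qed

lemma even_card_involution:
  assumes "finite A" "\<And>x. x \<in> A \<Longrightarrow> f x \<in> A \<and> f x \<noteq> x \<and> f (f x) = x"
  shows "even (card A)"
proof -
  let ?C = "(\<lambda>x. {x, f x}) ` A"
  have orbit: "{x, f x} = {z, f z}" if "x \<in> A" "z \<in> {x, f x}" for x z
    using that assms(2) by auto
  have "2 * card ?C = card (\<Union> ?C)"
  proof (rule card_partition)
    show "finite (\<Union> ?C)"
      using assms by auto
    show "card c = 2" if "c \<in> ?C" for c
      using that assms(2) by (fastforce simp: card_insert_if)
    show "c1 \<inter> c2 = {}" if "c1 \<in> ?C" "c2 \<in> ?C" "c1 \<noteq> c2" for c1 c2
      using that orbit by blast
  qed (use assms in auto)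
  moreover have "\<Union> ?C = A"
    using assms(2) by auto
  ultimately show ?thesis
    by (metis dvd_triv_left)
qed

lemma sum_change_two:
  fixes f g :: "'a \<Rightarrow> 'b::comm_monoid_add"
  assumes "finite A" "a \<in> A" "b \<in> A" "a \<noteq> b"
    and "\<And>x. x \<in> A \<Longrightarrow> x \<noteq> a \<Longrightarrow> x \<noteq> b \<Longrightarrow> f x = g x"
  shows "sum f A + g a + g b = sum g A + f a + f b"
proof -
  have split: "sum h A = sum h (A - {a, b}) + (h a + h b)" for h :: "'a \<Rightarrow> 'b"
  proof -
    have "sum h A = sum h (A - {a, b}) + sum h {a, b}"
      by (rule sum.subset_diff) (use assms in auto)
    then show ?thesis
      using assms(4) by simp
  qed
  have "sum f (A - {a, b}) = sum g (A - {a, b})"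
    using assms(5) by (intro sum.cong) auto
  then show ?thesis
    unfolding split[of f] split[of g] by (simp only: ac_simps)
qed

definition d_active :: "(nat \<Rightarrow> nat \<Rightarrow> nat) \<Rightarrow> nat \<Rightarrow> nat \<Rightarrow> bool" where
  "d_active m r i \<longleftrightarrow> 2 \<le> m r i \<and> even (m (Suc r) i)"

lemma dlin_eq_f2_sum: "dlin = f2_sum dmono"
  by (simp add: fun_eq_iff dlin_def f2_sum_def)

lemma dmono_eq_image: "dmono m = (\<lambda>(r, i). step m r i) ` {(r, i). d_active m r i}"
  unfolding dmono_def d_active_def by auto

lemma inj_on_step: "inj_on (\<lambda>(r, i). step m r i) {(r, i). d_active m r i}"
proof (rule inj_onI, clarsimp)
  fix r i r' i'
  assume active: "d_active m r i" "d_active m r' i'" and "step m r i = step m r' i'"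
  then have "step m r i r i = step m r' i' r i"
    by simp
  with active show "r = r' \<and> i = i'"
    unfolding step_def d_active_def by (auto split: if_splits)
qed

lemma d_active_step:
  assumes "d_active m r i"
  shows "d_active (step m r i) r' i' \<longleftrightarrow> d_active m r' i' \<and> (r', i') \<noteq> (r, i)"
proof -
  consider "(r', i') = (r, i)" | "(r', i') = (Suc r, i)" | "(Suc r', i') = (r, i)"
    | "(r', i') \<noteq> (r, i)" "(r', i') \<noteq> (Suc r, i)" "(Suc r', i') \<noteq> (r, i)"
    by blast
  then show ?thesis
    using assms by cases (auto simp: d_active_def step_def)
qed

lemma step_step_commute:
  assumes "2 \<le> m r i" "2 \<le> m r' i'" "(r, i) \<noteq> (r', i')"
  shows "step (step m r i) r' i' = step (step m r' i') r i"
  using assms unfolding fun_eq_iff step_def by auto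

text \<open>Each term of \<open>\<partial>(\<partial>m)\<close> arises from the two orders of applying
  two distinct moves, so the terms cancel in pairs.\<close>

lemma dmono_dmono:
  assumes fin: "finite {(r, i). d_active m r i}"
  shows "f2_sum dmono (dmono m) = {}"
proof -
  let ?V = "{(r, i). d_active m r i}"
  let ?F = "\<lambda>(r, i). step m r i"
  define G where "G p = (\<lambda>(r, i). step (?F p) r i)" for p
  have active: "{(r, i). d_active (?F p) r i} = ?V - {p}" if "p \<in> ?V" for p
    using that d_active_step by (cases p) auto
  have dmono_F: "(dmono \<circ> ?F) p = G p ` (?V - {p})" if "p \<in> ?V" for p
    using active[OF that] unfolding G_def by (simp add: dmono_eq_image)
  have inj_G: "inj_on (G p) (?V - {p})" if "p \<in> ?V" for p
    unfolding G_def using inj_on_step[of "?F p"] active[OF that] by simp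
  have G_sym: "G p q = G q p" if "p \<in> ?V" "q \<in> ?V" "p \<noteq> q" for p q
    using that step_step_commute unfolding G_def d_active_def by (cases p, cases q) auto
  have "even (card {p \<in> ?V. y \<in> G p ` (?V - {p})})" for y
  proof -
    let ?P = "{pq \<in> ?V \<times> ?V. fst pq \<noteq> snd pq \<and> G (fst pq) (snd pq) = y}"
    have "finite ?P"
      using fin by (auto intro: finite_subset[of _ "?V \<times> ?V"])
    then have "even (card ?P)"
    proof (rule even_card_involution)
      fix pq
      assume "pq \<in> ?P"
      then show "prod.swap pq \<in> ?P \<and> prod.swap pq \<noteq> pq \<and> prod.swap (prod.swap pq) = pq"
        using G_sym by (cases pq) auto
    qed
    moreover have inj: "inj_on fst ?P"
    proof (rule inj_onI)
      fix a b
      assume "a \<in> ?P" "b \<in> ?P" "fst a = fst b"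
      then have "snd a = snd b"
        using inj_onD[OF inj_G[of "fst a"]] by (auto simp: mem_Times_iff)
      with \<open>fst a = fst b\<close> show "a = b"
        by (simp add: prod_eq_iff)
    qed
    moreover have "fst ` ?P = {p \<in> ?V. y \<in> G p ` (?V - {p})}"
      by force
    ultimately show ?thesis
      using card_image[OF inj] by simp
  qed
  moreover have "{p \<in> ?V. y \<in> (dmono \<circ> ?F) p} = {p \<in> ?V. y \<in> G p ` (?V - {p})}" for y
    using dmono_F by blast
  ultimately have "f2_sum (dmono \<circ> ?F) ?V = {}"
    unfolding f2_sum_def by simp
  moreover have "f2_sum dmono (dmono m) = f2_sum (dmono \<circ> ?F) ?V"
    unfolding dmono_eq_image by (rule f2_sum_reindex[OF inj_on_step])
  ultimately show ?thesis
    by simp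
qed

definition pivotal :: "(nat \<Rightarrow> nat \<Rightarrow> nat) \<Rightarrow> nat \<Rightarrow> nat \<Rightarrow> bool" where
  "pivotal m r i \<longleftrightarrow> odd (m (Suc r) i) \<or> 2 \<le> m r i"

text \<open>Positions \<open>(r, i)\<close> are ordered lexicographically.\<close>

definition pivot :: "(nat \<Rightarrow> nat \<Rightarrow> nat) \<Rightarrow> nat \<times> nat" where
  "pivot m = (LEAST p. pivotal m (fst p) (snd p))"

definition unstep :: "(nat \<Rightarrow> nat \<Rightarrow> nat) \<Rightarrow> nat \<Rightarrow> nat \<Rightarrow> (nat \<Rightarrow> nat \<Rightarrow> nat)" where
  "unstep m r i = (\<lambda>r' i'. if r' = r \<and> i' = i then m r i + 2
                           else if r' = Suc r \<and> i' = i then m (Suc r) i - 1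
                           else m r' i')"

definition hmono :: "(nat \<Rightarrow> nat \<Rightarrow> nat) \<Rightarrow> (nat \<Rightarrow> nat \<Rightarrow> nat) set" where
  "hmono m = (case pivot m of (r, i) \<Rightarrow> if odd (m (Suc r) i) then {unstep m r i} else {})"

lemma d_active_pivotal: "d_active m r i \<Longrightarrow> pivotal m r i"
  by (simp add: d_active_def pivotal_def)

lemma pivotal_pivot: "pivotal m r i \<Longrightarrow> pivot m = (r0, i0) \<Longrightarrow> pivotal m r0 i0"
  using LeastI[of "\<lambda>p. pivotal m (fst p) (snd p)" "(r, i)"] by (simp add: pivot_def)

lemma pivot_le: "pivotal m r i \<Longrightarrow> pivot m \<le> (r, i)"
  using Least_le[of "\<lambda>p. pivotal m (fst p) (snd p)" "(r, i)"] by (simp add: pivot_def)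

lemma pivot_eqI:
  assumes "pivotal m r0 i0" "\<And>r i. (r, i) < (r0, i0) \<Longrightarrow> \<not> pivotal m r i"
  shows "pivot m = (r0, i0)"
  unfolding pivot_def by (rule Least_equality) (use assms in \<open>auto simp: not_less[symmetric]\<close>)

lemma pivotal_step_below:
  assumes "2 \<le> m r i" "(r', i') < (r, i)"
  shows "pivotal (step m r i) r' i' \<longleftrightarrow> pivotal m r' i'"
  using assms by (auto simp: pivotal_def step_def)

lemma odd_step_other:
  assumes "2 \<le> m r i" "(r0, i0) \<noteq> (r, i)"
  shows "odd (step m r i (Suc r0) i0) \<longleftrightarrow> odd (m (Suc r0) i0)"
  using assms by (auto simp: step_def)

text \<open>A move of \<open>\<partial>\<close> never makes a position before the pivot pivotal, and it keeps
  the pivot pivotal: a move at the pivot itself makes the entry above it odd.\<close>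

lemma pivot_step:
  assumes piv: "pivot m = (r0, i0)" "pivotal m r0 i0" and active: "d_active m r i"
  shows "pivot (step m r i) = (r0, i0)"
proof (rule pivot_eqI)
  have le: "(r0, i0) \<le> (r, i)"
    using pivot_le[OF d_active_pivotal[OF active]] piv by simp
  have two: "2 \<le> m r i"
    using active by (simp add: d_active_def)
  show "\<not> pivotal (step m r i) r' i'" if below: "(r', i') < (r0, i0)" for r' i'
  proof -
    have "(r', i') < (r, i)"
      using below le by (rule less_le_trans)
    with two have "pivotal (step m r i) r' i' \<longleftrightarrow> pivotal m r' i'"
      by (rule pivotal_step_below)
    moreover have "\<not> pivotal m r' i'"
      using pivot_le[of m r' i'] piv(1) below by auto
    ultimately show ?thesis
      by simp
  qed
  show "pivotal (step m r i) r0 i0"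
  proof (cases "(r0, i0) = (r, i)")
    case True
    then show ?thesis
      using active by (auto simp: pivotal_def step_def d_active_def)
  next
    case False
    from False le have "(r0, i0) < (r, i)"
      by (rule order.not_eq_order_implies_strict)
    with two have "pivotal (step m r i) r0 i0 \<longleftrightarrow> pivotal m r0 i0"
      by (rule pivotal_step_below)
    with piv(2) show ?thesis
      by simp
  qed
qed

lemma hmono_step:
  assumes "pivot m = (r0, i0)" "pivotal m r0 i0" "d_active m r i"
  shows "hmono (step m r i)
    = (if odd (step m r i (Suc r0) i0) then {unstep (step m r i) r0 i0} else {})"
  by (simp add: hmono_def pivot_step[OF assms])

lemma step_unstep: "0 < m (Suc r) i \<Longrightarrow> step (unstep m r i) r i = m"
  by (auto simp: fun_eq_iff step_def unstep_def)

lemma unstep_step: "2 \<le> m r i \<Longrightarrow> unstep (step m r i) r i = m"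
  by (auto simp: fun_eq_iff step_def unstep_def)

lemma step_unstep_commute:
  assumes "2 \<le> m r i" "0 < m (Suc r0) i0"
  shows "step (unstep m r0 i0) r i = unstep (step m r i) r0 i0"
  using assms unfolding fun_eq_iff step_def unstep_def by auto

lemma d_active_unstep:
  assumes "odd (m (Suc r0) i0)"
  shows "d_active (unstep m r0 i0) r i \<longleftrightarrow> d_active m r i \<or> (r, i) = (r0, i0)"
proof -
  have "2 \<le> m (Suc r0) i0 - 1 \<longleftrightarrow> 2 \<le> m (Suc r0) i0"
    using assms by presburger
  moreover consider "(r, i) = (r0, i0)" | "(r, i) = (Suc r0, i0)" | "(Suc r, i) = (r0, i0)"
    | "(r, i) \<noteq> (r0, i0)" "(r, i) \<noteq> (Suc r0, i0)" "(Suc r, i) \<noteq> (r0, i0)"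
    by blast
  ultimately show ?thesis
    using assms by cases (auto simp: d_active_def unstep_def)
qed

lemma dh_hd_odd_pivot:
  assumes piv: "pivot m = (r0, i0)" and odd: "odd (m (Suc r0) i0)"
  shows "sym_diff (f2_sum dmono (hmono m)) (f2_sum hmono (dmono m)) = {m}"
proof -
  let ?V = "{(r, i). d_active m r i}"
  let ?m' = "unstep m r0 i0"
  let ?F' = "\<lambda>(r, i). step ?m' r i"
  have pivotal: "pivotal m r0 i0"
    using odd by (simp add: pivotal_def)
  have pos: "0 < m (Suc r0) i0"
    using odd by (simp add: odd_pos)
  have active': "{(r, i). d_active ?m' r i} = insert (r0, i0) ?V"
    using odd by (auto simp: d_active_unstep)
  have "f2_sum dmono (hmono m) = dmono ?m'"
    using piv odd by (simp add: hmono_def)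
  also have "\<dots> = insert m (?F' ` ?V)"
    unfolding dmono_eq_image active' using step_unstep[of m, OF pos] by simp
  finally have dh: "f2_sum dmono (hmono m) = insert m (?F' ` ?V)" .
  have "f2_sum hmono (dmono m) = f2_sum (hmono \<circ> (\<lambda>(r, i). step m r i)) ?V"
    unfolding dmono_eq_image by (rule f2_sum_reindex[OF inj_on_step])
  also have "\<dots> = f2_sum (\<lambda>p. {?F' p}) ?V"
  proof -
    have "hmono (step m r i) = {step ?m' r i}" if active: "d_active m r i" for r i
    proof -
      have two: "2 \<le> m r i" and "(r0, i0) \<noteq> (r, i)"
        using active odd by (auto simp: d_active_def)
      then have "odd (step m r i (Suc r0) i0)"
        using odd_step_other odd by blast
      then show ?thesis
        using hmono_step[OF piv pivotal active] step_unstep_commute[of m r i r0 i0, OF two pos] by simp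
    qed
    then show ?thesis
      by (intro f2_sum_cong) auto
  qed
  also have "\<dots> = ?F' ` ?V"
    by (rule f2_sum_singletons, rule inj_on_subset[OF inj_on_step]) (use active' in auto)
  finally have hd: "f2_sum hmono (dmono m) = ?F' ` ?V" .
  have "m \<noteq> step ?m' r i" if active: "d_active m r i" for r i
  proof -
    have "(r0, i0) \<noteq> (r, i)"
      using active odd by (auto simp: d_active_def)
    moreover have "(r0, i0) \<le> (r, i)"
      using pivot_le[OF d_active_pivotal[OF active]] piv by simp
    ultimately have "step ?m' r i r0 i0 = m r0 i0 + 2"
      by (auto simp: step_def unstep_def)
    then show ?thesis
      by auto
  qed
  then have "m \<notin> ?F' ` ?V"
    by auto
  with dh hd show ?thesis
    by auto
qed

lemma dh_hd_even_pivot: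
  assumes piv: "pivot m = (r0, i0)" "pivotal m r0 i0" and even: "even (m (Suc r0) i0)"
  shows "sym_diff (f2_sum dmono (hmono m)) (f2_sum hmono (dmono m)) = {m}"
proof -
  let ?V = "{(r, i). d_active m r i}"
  have active0: "d_active m r0 i0"
    using piv(2) even by (simp add: pivotal_def d_active_def)
  have "f2_sum hmono (dmono m) = f2_sum (hmono \<circ> (\<lambda>(r, i). step m r i)) ?V"
    unfolding dmono_eq_image by (rule f2_sum_reindex[OF inj_on_step])
  also have "\<dots> = f2_sum (\<lambda>p. if p = (r0, i0) then {m} else {}) ?V"
  proof (rule f2_sum_cong, clarify)
    fix r i
    assume active: "d_active m r i"
    then have two: "2 \<le> m r i"
      by (simp add: d_active_def)
    show "(hmono \<circ> (\<lambda>(r, i). step m r i)) (r, i) = (if (r, i) = (r0, i0) then {m} else {})"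
    proof (cases "(r, i) = (r0, i0)")
      case True
      moreover have "odd (step m r i (Suc r) i)"
        using active by (simp add: step_def d_active_def)
      ultimately show ?thesis
        using hmono_step[OF piv active] unstep_step[of m r i, OF two] by simp
    next
      case False
      then show ?thesis
        using hmono_step[OF piv active] odd_step_other[of m r i r0 i0, OF two] even by auto
    qed
  qed
  also have "\<dots> = {m}"
    by (rule f2_sum_point) (use active0 in simp)
  moreover have "hmono m = {}"
    using piv even by (simp add: hmono_def)
  ultimately show ?thesis
    by simp
qed

lemma dh_hd_identity:
  assumes "pivotal m r i"
  shows "sym_diff (f2_sum dmono (hmono m)) (f2_sum hmono (dmono m)) = {m}"
proof -
  obtain r0 i0 where piv: "pivot m = (r0, i0)"
    by fastforce
  moreover have "pivotal m r0 i0"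
    using pivotal_pivot[OF assms piv] .
  ultimately show ?thesis
    using dh_hd_odd_pivot dh_hd_even_pivot by blast
qed

lemma deg_as_sum: "deg n d m = (\<Sum>(r, i) \<in> {..<d} \<times> {..<n}. m r i)"
  by (simp add: deg_def sum.cartesian_product)

lemma wt_as_sum: "wt n d m = (\<Sum>(r, i) \<in> {..<d} \<times> {..<n}. 2 ^ r * m r i)"
  by (simp add: wt_def sum.cartesian_product)

lemma entry_le_deg: "r < d \<Longrightarrow> i < n \<Longrightarrow> m r i \<le> deg n d m"
  unfolding deg_as_sum
  using member_le_sum[of "(r, i)" "{..<d} \<times> {..<n}" "\<lambda>(r, i). m r i"] by simp

lemma weighted_entry_le_wt: "r < d \<Longrightarrow> i < n \<Longrightarrow> 2 ^ r * m r i \<le> wt n d m"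
  unfolding wt_as_sum
  using member_le_sum[of "(r, i)" "{..<d} \<times> {..<n}" "\<lambda>(r, i). 2 ^ r * m r i"] by simp

lemma deg_wt_step:
  assumes "2 \<le> m r i" "Suc r < d" "i < n"
  shows "deg n d m = Suc (deg n d (step m r i))" "wt n d m = wt n d (step m r i)"
proof -
  let ?D = "{..<d} \<times> {..<n}"
  let ?S = "\<lambda>(r', i'). step m r i r' i'" and ?M = "\<lambda>(r', i'). m r' i'"
  let ?wS = "\<lambda>(r', i'). 2 ^ r' * step m r i r' i'" and ?wM = "\<lambda>(r', i'). 2 ^ r' * m r' i'"
  obtain a where a: "m r i = a + 2"
    using assms(1) by (metis add.commute le_add_diff_inverse)
  then have at: "step m r i r i = a" "step m r i (Suc r) i = Suc (m (Suc r) i)"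
    by (simp_all add: step_def)
  have "sum ?S ?D + ?M (r, i) + ?M (Suc r, i) = sum ?M ?D + ?S (r, i) + ?S (Suc r, i)"
    by (rule sum_change_two) (use assms in \<open>auto simp: step_def split: if_splits\<close>)
  then show "deg n d m = Suc (deg n d (step m r i))"
    unfolding deg_as_sum by (simp add: at a)
  have "sum ?wS ?D + ?wM (r, i) + ?wM (Suc r, i) = sum ?wM ?D + ?wS (r, i) + ?wS (Suc r, i)"
    by (rule sum_change_two) (use assms in \<open>auto simp: step_def split: if_splits\<close>)
  then show "wt n d m = wt n d (step m r i)"
    unfolding wt_as_sum by (simp add: at a algebra_simps)
qed

lemma Bas_support: "m \<in> Bas n d j \<Longrightarrow> m r i \<noteq> 0 \<Longrightarrow> r < d \<and> i < n"
  by (simp add: Bas_def)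

lemma step_in_Bas:
  assumes m: "m \<in> Bas n d (Suc j)" and active: "d_active m r i"
  shows "step m r i \<in> Bas n d j"
proof -
  note supp = Bas_support[OF m]
  have deg: "deg n d m = Suc j" and wt: "wt n d m = d"
    using m by (simp_all add: Bas_def)
  have two: "2 \<le> m r i"
    using active by (simp add: d_active_def)
  then have ri: "r < d" "i < n"
    using supp[of r i] by auto
  have "2 ^ Suc r \<le> 2 ^ r * m r i"
    using two by simp
  also have "\<dots> \<le> d"
    using weighted_entry_le_wt[OF ri, of m] wt by simp
  finally have "Suc r < d"
    using less_exp[of "Suc r"] by linarith
  then show ?thesis
    using deg_wt_step[of m r i d n, OF two _ ri(2)] supp ri deg wt by (auto simp: Bas_def step_def)
qed

lemma unstep_in_Bas:
  assumes m: "m \<in> Bas n d j" and odd: "odd (m (Suc r) i)"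
  shows "unstep m r i \<in> Bas n d (Suc j)"
proof -
  let ?m' = "unstep m r i"
  note supp = Bas_support[OF m]
  have deg: "deg n d m = j" and wt: "wt n d m = d"
    using m by (simp_all add: Bas_def)
  have pos: "0 < m (Suc r) i"
    using odd by (simp add: odd_pos)
  then have ri: "Suc r < d" "i < n"
    using supp[of "Suc r" i] by auto
  have "2 \<le> ?m' r i"
    by (simp add: unstep_def)
  from deg_wt_step[of ?m' r i d n, OF this ri] step_unstep[of m, OF pos]
  have "deg n d ?m' = Suc j" "wt n d ?m' = d"
    using deg wt by simp_all
  moreover have "?m' r' i' \<noteq> 0 \<Longrightarrow> r' < d \<and> i' < n" for r' i'
    using supp ri by (auto simp: unstep_def split: if_splits)
  ultimately show ?thesis
    by (simp add: Bas_def)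
qed

lemma dmono_subset_Bas: "m \<in> Bas n d (Suc j) \<Longrightarrow> dmono m \<subseteq> Bas n d j"
  by (auto simp: dmono_eq_image intro: step_in_Bas)

lemma hmono_subset_Bas: "m \<in> Bas n d j \<Longrightarrow> hmono m \<subseteq> Bas n d (Suc j)"
  by (auto simp: hmono_def intro: unstep_in_Bas split: prod.split)

lemma finite_hmono: "finite (hmono m)"
  by (simp add: hmono_def split: prod.split)

lemma finite_d_active:
  assumes "m \<in> Bas n d j"
  shows "finite {(r, i). d_active m r i}"
proof (rule finite_subset)
  show "{(r, i). d_active m r i} \<subseteq> {..<d} \<times> {..<n}"
  proof
    fix p
    assume "p \<in> {(r, i). d_active m r i}"
    then obtain r i where "p = (r, i)" "m r i \<noteq> 0"
      by (auto simp: d_active_def)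
    then show "p \<in> {..<d} \<times> {..<n}"
      using Bas_support[OF assms] by auto
  qed
qed simp

lemma finite_dmono: "m \<in> Bas n d j \<Longrightarrow> finite (dmono m)"
  by (simp add: dmono_eq_image finite_d_active)

lemma finite_Bas: "finite (Bas n d j)"
proof -
  let ?G = "{g :: nat \<Rightarrow> nat. \<forall>i. (i \<in> {..<n} \<longrightarrow> g i \<in> {..j}) \<and> (i \<notin> {..<n} \<longrightarrow> g i = 0)}"
  let ?H = "{m. \<forall>r. (r \<in> {..<d} \<longrightarrow> m r \<in> ?G) \<and> (r \<notin> {..<d} \<longrightarrow> m r = (\<lambda>_. 0))}"
  have "finite ?G"
    by (rule finite_set_of_finite_funs) auto
  then have "finite ?H"
    by (rule finite_set_of_finite_funs[rotated]) auto
  moreover have "Bas n d j \<subseteq> ?H"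
    using entry_le_deg by (fastforce simp: Bas_def fun_eq_iff)
  ultimately show ?thesis
    by (rule finite_subset[rotated])
qed

text \<open>If no position is pivotal, all levels \<open>r > 0\<close> vanish and weight equals degree.\<close>

lemma pivotal_exists:
  assumes m: "m \<in> Bas n d j" and "j < d"
  shows "\<exists>r i. pivotal m r i"
proof (rule ccontr)
  assume none: "\<nexists>r i. pivotal m r i"
  have small: "m r i \<le> 1 \<and> even (m (Suc r) i)" for r i
  proof -
    have "\<not> pivotal m r i"
      using none by blast
    then show ?thesis
      by (simp add: pivotal_def)
  qed
  have "2 ^ r * m r i = m r i" for r i
  proof (cases r)
    case (Suc r')
    then have "m r i = 0"
      using small[of r i] small[of r' i] by presburger
    then show ?thesis
      by simp
  qed simp
  then have "wt n d m = deg n d m"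
    by (simp only: wt_def deg_def)
  then show False
    using assms by (simp add: Bas_def)
qed

lemma boundaries_are_cycles: "dlin ` Xsp n d (Suc j) \<subseteq> SK n d j"
proof
  fix S
  assume "S \<in> dlin ` Xsp n d (Suc j)"
  then obtain T where T: "T \<subseteq> Bas n d (Suc j)" and S: "S = f2_sum dmono T"
    by (auto simp: Xsp_def dlin_eq_f2_sum)
  have fin: "finite T"
    using T finite_Bas finite_subset by blast
  have "f2_sum dmono S = f2_sum (\<lambda>m. f2_sum dmono (dmono m)) T"
    unfolding S by (rule f2_sum_f2_sum[OF fin]) (use T finite_dmono in blast)
  also have "\<dots> = f2_sum (\<lambda>m. {}) T"
    using T dmono_dmono[OF finite_d_active] by (intro f2_sum_cong) blast
  also have "\<dots> = {}"
    by (simp add: f2_sum_def)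
  finally have "f2_sum dmono S = {}" .
  moreover have "S \<subseteq> Bas n d j"
    using S T f2_sum_subset_UN[of dmono T] dmono_subset_Bas by blast
  ultimately show "S \<in> SK n d j"
    by (simp add: SK_def Xsp_def dlin_eq_f2_sum)
qed

lemma cycles_are_boundaries:
  assumes "j < d"
  shows "SK n d j \<subseteq> dlin ` Xsp n d (Suc j)"
proof
  fix S
  assume "S \<in> SK n d j"
  then have S: "S \<subseteq> Bas n d j" and cycle: "f2_sum dmono S = {}"
    by (auto simp: SK_def Xsp_def dlin_eq_f2_sum)
  have fin: "finite S"
    using S finite_Bas finite_subset by blast
  let ?T = "f2_sum hmono S"
  have "?T \<subseteq> Bas n d (Suc j)"
    using S f2_sum_subset_UN[of hmono S] hmono_subset_Bas by blast
  have dh: "f2_sum dmono ?T = f2_sum (\<lambda>m. f2_sum dmono (hmono m)) S"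
    by (rule f2_sum_f2_sum[OF fin finite_hmono])
  have hd: "f2_sum hmono (f2_sum dmono S) = f2_sum (\<lambda>m. f2_sum hmono (dmono m)) S"
    by (rule f2_sum_f2_sum[OF fin]) (use S finite_dmono in blast)
  have "sym_diff (f2_sum dmono ?T) (f2_sum hmono (f2_sum dmono S))
      = f2_sum (\<lambda>m. sym_diff (f2_sum dmono (hmono m)) (f2_sum hmono (dmono m))) S"
    unfolding dh hd by (rule sym_diff_f2_sum[OF fin])
  also have "\<dots> = f2_sum (\<lambda>m. {m}) S"
    by (rule f2_sum_cong) (use S pivotal_exists[OF _ assms] dh_hd_identity in blast)
  also have "\<dots> = S"
    using f2_sum_singletons[of id S] by simp
  finally have "dlin ?T = S"
    using cycle by (simp add: dlin_eq_f2_sum)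
  with \<open>?T \<subseteq> Bas n d (Suc j)\<close> show "S \<in> dlin ` Xsp n d (Suc j)"
    by (auto simp: Xsp_def)
qed

text \<open>In top degree, weight equals degree, which forces all levels \<open>r > 0\<close> to vanish.\<close>

lemma Bas_top_level_zero:
  assumes m: "m \<in> Bas n d d" and "0 < r"
  shows "m r i = 0"
proof (cases "r < d \<and> i < n")
  case True
  let ?D = "{..<d} \<times> {..<n}"
  have "deg n d m = wt n d m"
    using m by (simp add: Bas_def)
  then have "(\<Sum>(r, i) \<in> ?D. m r i) = (\<Sum>(r, i) \<in> ?D. 2 ^ r * m r i)"
    by (simp only: deg_as_sum wt_as_sum)
  then have "(\<lambda>(r, i). m r i) (r, i) = (\<lambda>(r, i). 2 ^ r * m r i) (r, i)"
    by (rule sum_mono_inv) (use True in auto)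
  moreover have "(2::nat) ^ r \<noteq> 1"
    using \<open>0 < r\<close> by simp
  ultimately show ?thesis
    by simp
next
  case False
  then show ?thesis
    using Bas_support[OF m] by blast
qed

lemma d_active_top:
  assumes "m \<in> Bas n d d"
  shows "d_active m r i \<longleftrightarrow> r = 0 \<and> 2 \<le> m 0 i"
  using Bas_top_level_zero[OF assms] by (cases r) (auto simp: d_active_def)

lemma top_step_determines:
  assumes m: "m \<in> Bas n d d" and m': "m' \<in> Bas n d d"
    and two: "2 \<le> m 0 i" and in_dmono: "step m 0 i \<in> dmono m'"
  shows "m' = m"
proof -
  obtain r' i' where eq: "step m 0 i = step m' r' i'" and active: "d_active m' r' i'"
    using in_dmono by (auto simp: dmono_eq_image)
  then have r': "r' = 0" and two': "2 \<le> m' 0 i'"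
    using d_active_top[OF m'] by auto
  have "step m' 0 i' (Suc 0) i' = Suc 0"
    using Bas_top_level_zero[OF m', of 1 i'] by (simp add: step_def)
  moreover have "step m 0 i (Suc 0) i' = (if i' = i then Suc 0 else 0)"
    using Bas_top_level_zero[OF m, of 1 i'] by (cases "i' = i") (simp_all add: step_def)
  ultimately have "i' = i"
    using eq r' by (metis zero_neq_one One_nat_def)
  then show ?thesis
    using unstep_step[of m' 0 i] unstep_step[of m 0 i] two two' eq r' by simp
qed

lemma SK_top: "SK n d d = Lam n d"
proof
  show "SK n d d \<subseteq> Lam n d"
  proof
    fix S
    assume "S \<in> SK n d d"
    then have S: "S \<subseteq> Bas n d d" and cycle: "f2_sum dmono S = {}"
      by (simp_all add: SK_def Xsp_def dlin_eq_f2_sum)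
    have "m 0 i \<le> 1" if m: "m \<in> S" for m i
    proof (rule ccontr)
      assume "\<not> m 0 i \<le> 1"
      then have two: "2 \<le> m 0 i"
        by simp
      have mB: "m \<in> Bas n d d"
        using m S by blast
      have "even (m (Suc 0) i)"
        using Bas_top_level_zero[OF mB, of "Suc 0" i] by simp
      with two have "step m 0 i \<in> dmono m"
        unfolding dmono_def by blast
      then have "{m' \<in> S. step m 0 i \<in> dmono m'} = {m}"
        using m S top_step_determines[OF mB _ two] by blast
      then have "step m 0 i \<in> f2_sum dmono S"
        by (simp add: f2_sum_def)
      with cycle show False
        by simp
    qed
    with S show "S \<in> Lam n d"
      by (simp add: Lam_def Xsp_def)
  qed
next
  show "Lam n d \<subseteq> SK n d d"
  proof
    fix S
    assume "S \<in> Lam n d"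
    then have S: "S \<subseteq> Bas n d d" and square_free: "\<And>m i. m \<in> S \<Longrightarrow> m 0 i \<le> 1"
      by (simp_all add: Lam_def Xsp_def)
    have "dmono m = {}" if m: "m \<in> S" for m
    proof -
      have "\<not> d_active m r i" for r i
        using d_active_top[of m n d r i] m S square_free[OF m, of i] by auto
      then show ?thesis
        by (simp add: dmono_eq_image)
    qed
    then have "f2_sum dmono S = {}"
      using f2_sum_subset_UN[of dmono S] by blast
    with S show "S \<in> SK n d d"
      by (simp add: SK_def Xsp_def dlin_eq_f2_sum)
  qed
qed

lemma Bas_deg_zero:
  assumes "0 < d"
  shows "Bas n d 0 = {}"
proof -
  have "wt n d m = 0" if "deg n d m = 0" for m
    using that by (simp add: deg_def wt_def)
  with assms show ?thesis
    by (auto simp: Bas_def)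
qed

lemma wt_eq_power_if_deg_one:
  assumes "deg n d m = 1"
  shows "\<exists>r. wt n d m = 2 ^ r"
proof -
  let ?D = "{..<d} \<times> {..<n}"
  have "(\<Sum>(r, i) \<in> ?D. m r i) = 1"
    using assms by (simp add: deg_as_sum)
  then obtain p where p: "p \<in> ?D" "(\<lambda>(r, i). m r i) p = 1"
    and others: "\<forall>q \<in> ?D. p \<noteq> q \<longrightarrow> (\<lambda>(r, i). m r i) q = 0"
    by (subst (asm) sum_eq_1_iff) blast+
  obtain r i where p_eq: "p = (r, i)"
    by (cases p)
  have "wt n d m = (\<lambda>(r, i). 2 ^ r * m r i) p + (\<Sum>(r, i) \<in> ?D - {p}. 2 ^ r * m r i)"
    unfolding wt_as_sum by (rule sum.remove) (use p in simp_all)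
  also have "(\<Sum>(r, i) \<in> ?D - {p}. 2 ^ r * m r i) = 0"
  proof (rule sum.neutral, rule ballI)
    fix q
    assume "q \<in> ?D - {p}"
    then show "(\<lambda>(r, i). 2 ^ r * m r i) q = 0"
      using others[rule_format, of q] by (cases q) auto
  qed
  finally show ?thesis
    using p(2) p_eq by auto
qed

lemma Bas_3_1: "Bas n 3 1 = {}"
proof (rule equals0I)
  fix m
  assume "m \<in> Bas n 3 1"
  then obtain r where pow: "(2::nat) ^ r = 3"
    using wt_eq_power_if_deg_one[of n 3 m] by (auto simp: Bas_def)
  then have "odd ((2::nat) ^ r)"
    by simp
  then have "r = 0"
    by simp
  with pow show False
    by simp
qed

lemma SK_eq_Xsp_if_Bas_empty:
  assumes "Bas n d j = {}"
  shows "SK n d (Suc j) = Xsp n d (Suc j)"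
proof -
  have "dlin S = {}" if S: "S \<in> Xsp n d (Suc j)" for S
  proof -
    have "dmono m = {}" if "m \<in> S" for m
      using dmono_subset_Bas[of m n d j] that S assms by (auto simp: Xsp_def)
    then show ?thesis
      using f2_sum_subset_UN[of dmono S] by (auto simp: dlin_eq_f2_sum)
  qed
  then show ?thesis
    by (auto simp: SK_def)
qed

lemma SK_eq_boundaries: "j < d \<Longrightarrow> SK n d j = dlin ` Xsp n d (Suc j)"
  using boundaries_are_cycles cycles_are_boundaries by (rule subset_antisym[rotated])

theorem proposition7p2:
  fixes n d :: nat
  shows "SK n d d = Lam n d
    \<and> {S \<in> Xsp n d d. dlin S = {}} = Lam n d
    \<and> SK n 1 0 = {{}}
    \<and> SK n 2 1 = Xsp n 2 1
    \<and> SK n 3 2 = Xsp n 3 2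
    \<and> (1 \<le> d \<longrightarrow> SK n d (d - 1) = dlin ` Xsp n d d)
    \<and> (\<forall>i. i + 1 < d \<longrightarrow>
          SK n d i = dlin ` Xsp n d (Suc i)
        \<and> {S \<in> Xsp n d (Suc i). dlin S = {}} = dlin ` Xsp n d (i + 2)
        \<and> dlin ` Xsp n d (Suc i) = SK n d i)"
proof (intro conjI impI allI)
  show top: "SK n d d = Lam n d"
    by (rule SK_top)
  then show "{S \<in> Xsp n d d. dlin S = {}} = Lam n d"
    by (simp add: SK_def)
  show "SK n 1 0 = {{}}"
    using Bas_deg_zero[of 1 n] by (auto simp: SK_def Xsp_def dlin_eq_f2_sum)
  show "SK n 2 1 = Xsp n 2 1"
    using SK_eq_Xsp_if_Bas_empty[OF Bas_deg_zero[of 2 n]] by simp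
  show "SK n 3 2 = Xsp n 3 2"
    using SK_eq_Xsp_if_Bas_empty[OF Bas_3_1] by (simp add: numeral_2_eq_2)
  show "SK n d (d - 1) = dlin ` Xsp n d d" if "1 \<le> d"
    using SK_eq_boundaries[of "d - 1" d n] that by simp
  fix i
  assume "i + 1 < d"
  then have "SK n d i = dlin ` Xsp n d (Suc i)" "SK n d (Suc i) = dlin ` Xsp n d (i + 2)"
    using SK_eq_boundaries[of i d n] SK_eq_boundaries[of "Suc i" d n] by (simp_all add: numeral_2_eq_2)
  then show "SK n d i = dlin ` Xsp n d (Suc i)" "dlin ` Xsp n d (Suc i) = SK n d i"
    and "{S \<in> Xsp n d (Suc i). dlin S = {}} = dlin ` Xsp n d (i + 2)"
    unfolding SK_def by simp_all
qed

end
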